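(* Consider the augmented Lagrange algorithm described in the context, and assume that in step (1) the pair $(\bar y_k,\bar u_k)$ is always chosen to be a global minimizer of the augmented Lagrange sub-problem with parameters $\mu_k,\rho_k$ (together with its adjoint state). Assume that only finitely many steps of the algorithm are successful. Then $\frac1{\rho_k}\|(\mu_k+\rho_k(\bar y_k-\psi))_+\|^2_{L^2(\Omega)}$ is uniformly bounded in $k$.
   Context: Setting. Let $\Omega\subset\mathbb{R}^N$, $N\in\{2,3\}$, be a bounded domain with $C^{1,1}$ boundary $\Gamma$, or a bounded convex domain with polygonal boundary $\Gamma$. Let $y_d\in L^2(\Omega)$, $\psi\in C(\bar\Omega)$, $\alpha>0$, $u_a,u_b\in L^\infty(\Omega)$ with $u_a\le u_b$, $U_{ad}=\{u\in L^\infty(\Omega): u_a\le u\le u_b\text{ a.e.}\}$. Let $Ay=-\sum_{i,j=1}^N\partial_{x_j}(a_{ij}\partial_{x_i}y)+a_0y$ with $a_{ij}\in C^{0,1}(\bar\Omega)$, $a_0\in L^\infty(\Omega)$, $a_0\ge0$ a.e., $a_0\not\equiv0$, uniformly elliptic with constant $\delta>0$; $\partial_{\nu_A}y=\sum a_{ij}\partial_{x_i}y\,\nu_j$; $A^*$ the formal adjoint with conormal derivative $\partial_{\nu_{A^*}}$. The function $d:\Omega\times\mathbb{R}\to\mathbb{R}$ is measurable in $x$, $C^2$ in $y$ for a.e. $x$, $\|d(\cdot,0)\|_\infty+\|d_y(\cdot,0)\|_\infty+\|d_{yy}(\cdot,0)\|_\infty<\infty$, $d_y\ge0$, $d_{yy}$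 Lipschitz in $y$ on bounded sets uniformly in $x$, and $d_y>0$ on $E_\Omega\times\mathbb{R}$ for some $E_\Omega$ of positive measure. $S(u)\in H^1(\Omega)\cap C(\bar\Omega)$ is the weak solution of $Ay+d(x,y)=u$ in $\Omega$, $\partial_{\nu_A}y=0$ on $\Gamma$. $f(u)=\frac12\|S(u)-y_d\|_{L^2}^2+\frac\alpha2\|u\|_{L^2}^2$. Problem (P): minimize $f(u)$ over $u\in U_{ad}$ with $S(u)\le\psi$ on $\bar\Omega$. $(\cdot)_+=\max(0,\cdot)$ pointwise; $(a,b)_+:=\int_\Omega\max(0,a(x)b(x))dx$. Augmented Lagrange sub-problem ($\rho>0$, $0\le\mu\in L^2$): minimize $f_{AL}(u)=f(u)+\frac1{2\rho}\int_\Omega((\mu+\rho(S(u)-\psi))_+)^2dx$ over $u\in U_{ad}$. Its optimality system: $(\bar y,\bar u,\bar p)$ with $\bar u\in U_{ad}$, $\bar y=S(\bar u)$, $\bar p\in H^1(\Omega)$ weak solution of $A^*\bar p+d_y(x,\bar y)\bar p=\bar y-y_d+(\mu+\rho(\bar y-\psi))_+$, $\partial_{\nu_{A^*}}\bar p=0$, and $(\bar p+\alpha\bar u,u-\bar u)\ge0$ for all $u\in U_{ad}$ (every global minimizer with its adjoint satisfies it). Algorithm: choose $\rho_1>0$, $0\le\mu_1\in L^2(\Omega)$, $\theta>1$, $\tau\in(0,1)$, $R_0^+>0$; $k=n=1$. Iteration $k$: (1) choose a solution $(\bar y_k,\bar u_k,\bar p_k)$ of the optimality system with $\mu=\mu_k,\rho=\rho_k$;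 (2) $\bar\mu_k:=(\mu_k+\rho_k(\bar y_k-\psi))_+$; (3) $R_k:=\|(\bar y_k-\psi)_+\|_{C(\bar\Omega)}+(\bar\mu_k,\psi-\bar y_k)_+$; (4) if $R_k\le\tau R^+_{n-1}$ the step is successful: $\mu_{k+1}:=\bar\mu_k$, $\rho_{k+1}:=\rho_k$, $R_n^+:=R_k$, $n:=n+1$; (5) otherwise $\mu_{k+1}:=\mu_k$, $\rho_{k+1}:=\theta\rho_k$; then $k:=k+1$ and repeat indefinitely. *)

theory Defs
  imports "HOL-Analysis.Analysis"
begin

type_synonym 'n fn = "real^'n \<Rightarrow> real"

definition L2 :: "(real^'n) set \<Rightarrow> 'n fn \<Rightarrow> bool" where
  "L2 \<Omega> f \<longleftrightarrow> f \<in> borel_measurable (lebesgue_on \<Omega>)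
      \<and> integrable (lebesgue_on \<Omega>) (\<lambda>x. (f x)^2)"

definition Linf :: "(real^'n) set \<Rightarrow> 'n fn \<Rightarrow> bool" where
  "Linf \<Omega> f \<longleftrightarrow> f \<in> borel_measurable (lebesgue_on \<Omega>)
      \<and> (\<exists>C. AE x in lebesgue_on \<Omega>. \<bar>f x\<bar> \<le> C)"

definition test_fun :: "(real^'n) set \<Rightarrow> 'n fn \<Rightarrow> (real^'n \<Rightarrow> real^'n) \<Rightarrow> bool" where
  "test_fun \<Omega> \<phi> D\<phi> \<longleftrightarrow> (\<forall>x. (\<phi> has_derivative (\<lambda>h. D\<phi> x \<bullet> h)) (at x))
      \<and> continuous_on UNIV D\<phi>
      \<and> (\<exists>K. compact K \<and> K \<subseteq> \<Omega> \<and> (\<forall>x. x \<notin> K \<longrightarrow> \<phi> x = 0))"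

definition weak_grad :: "(real^'n) set \<Rightarrow> 'n fn \<Rightarrow> (real^'n \<Rightarrow> real^'n) \<Rightarrow> bool" where
  "weak_grad \<Omega> y G \<longleftrightarrow> (\<forall>i. L2 \<Omega> (\<lambda>x. G x $ i))
      \<and> (\<forall>\<phi> D\<phi>. test_fun \<Omega> \<phi> D\<phi> \<longrightarrow>
           (\<forall>i. (\<integral>x. y x * D\<phi> x $ i \<partial>lebesgue_on \<Omega>)
                 = - (\<integral>x. G x $ i * \<phi> x \<partial>lebesgue_on \<Omega>)))"

definition H1 :: "(real^'n) set \<Rightarrow> 'n fn \<Rightarrow> bool" where
  "H1 \<Omega> y \<longleftrightarrow> L2 \<Omega> y \<and> (\<exists>G. weak_grad \<Omega> y G)"

text \<open>y is a weak solution of  A y + d(x,y) = u  in Omega,  conormal derivative = 0 on the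
  boundary, with A y = - sum_{i,j} d_j (a_ij d_i y) + a0 y.\<close>
definition weak_sol ::
  "(real^'n) set \<Rightarrow> ('n \<Rightarrow> 'n \<Rightarrow> 'n fn) \<Rightarrow> 'n fn \<Rightarrow> (real^'n \<Rightarrow> real \<Rightarrow> real)
     \<Rightarrow> 'n fn \<Rightarrow> 'n fn \<Rightarrow> bool" where
  "weak_sol \<Omega> a a0 d u y \<longleftrightarrow> H1 \<Omega> y \<and>
     (\<exists>G. weak_grad \<Omega> y G \<and>
        (\<forall>v Gv. H1 \<Omega> v \<and> weak_grad \<Omega> v Gv \<longrightarrow>
           (\<integral>x. (\<Sum>i\<in>UNIV. \<Sum>j\<in>UNIV. a i j x * G x $ i * Gv x $ j)
                 + a0 x * y x * v x + d x (y x) * v x \<partial>lebesgue_on \<Omega>)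
           = (\<integral>x. u x * v x \<partial>lebesgue_on \<Omega>)))"

definition is_state ::
  "(real^'n) set \<Rightarrow> ('n \<Rightarrow> 'n \<Rightarrow> 'n fn) \<Rightarrow> 'n fn \<Rightarrow> (real^'n \<Rightarrow> real \<Rightarrow> real)
     \<Rightarrow> 'n fn \<Rightarrow> 'n fn \<Rightarrow> bool" where
  "is_state \<Omega> a a0 d u y \<longleftrightarrow> continuous_on (closure \<Omega>) y \<and> weak_sol \<Omega> a a0 d u y"

definition Uad :: "(real^'n) set \<Rightarrow> 'n fn \<Rightarrow> 'n fn \<Rightarrow> 'n fn set" where
  "Uad \<Omega> ua ub = {u. Linf \<Omega> u \<and> (AE x in lebesgue_on \<Omega>. ua x \<le> u x \<and> u x \<le> ub x)}"

definition cost :: "(real^'n) set \<Rightarrow> 'n fn \<Rightarrow> real \<Rightarrow> 'n fn \<Rightarrow> 'n fn \<Rightarrow> real" where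
  "cost \<Omega> yd \<alpha> y u = 1/2 * (\<integral>x. (y x - yd x)^2 \<partial>lebesgue_on \<Omega>)
                     + \<alpha>/2 * (\<integral>x. (u x)^2 \<partial>lebesgue_on \<Omega>)"

definition cost_AL ::
  "(real^'n) set \<Rightarrow> 'n fn \<Rightarrow> real \<Rightarrow> 'n fn \<Rightarrow> 'n fn \<Rightarrow> real \<Rightarrow> 'n fn \<Rightarrow> 'n fn \<Rightarrow> real" where
  "cost_AL \<Omega> yd \<alpha> \<psi> \<mu> \<rho> y u = cost \<Omega> yd \<alpha> y u
     + 1/(2*\<rho>) * (\<integral>x. (max 0 (\<mu> x + \<rho> * (y x - \<psi> x)))^2 \<partial>lebesgue_on \<Omega>)"

definition mu_bar :: "'n fn \<Rightarrow> 'n fn \<Rightarrow> real \<Rightarrow> 'n fn \<Rightarrow> 'n fn" where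
  "mu_bar \<psi> \<mu> \<rho> y = (\<lambda>x. max 0 (\<mu> x + \<rho> * (y x - \<psi> x)))"

definition resid :: "(real^'n) set \<Rightarrow> 'n fn \<Rightarrow> 'n fn \<Rightarrow> 'n fn \<Rightarrow> real" where
  "resid \<Omega> \<psi> mb y = (SUP x\<in>closure \<Omega>. max 0 (y x - \<psi> x))
       + (\<integral>x. max 0 (mb x * (\<psi> x - y x)) \<partial>lebesgue_on \<Omega>)"

text \<open>Boundary of class C^{1,1}: locally the domain lies below the graph (in a unit
  direction e) of a C^1 function with Lipschitz derivative.\<close>
definition C11_boundary :: "(real^'n) set \<Rightarrow> bool" where
  "C11_boundary \<Omega> \<longleftrightarrow> (\<forall>x0\<in>frontier \<Omega>. \<exists>r>0. \<exists>e g g' L.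
      norm e = 1
      \<and> (\<forall>z t. g (z + t *\<^sub>R e) = g z)
      \<and> (\<forall>z. (g has_derivative g' z) (at z))
      \<and> (\<forall>z w h. \<bar>g' z h - g' w h\<bar> \<le> L * norm (z - w) * norm h)
      \<and> \<Omega> \<inter> ball x0 r = {z\<in>ball x0 r. z \<bullet> e < g z})"

end

theory Submission
  imports Defs
begin

(* Comparing the global minimiser of the k-th sub-problem with a feasible control u',
   whose penalty term is at most |mu_k|^2 because S(u') <= psi, gives
     (1/rho_k) |(mu_k + rho_k (y_k - psi))_+|^2 <= 2 f(u') + |mu_k|^2 / rho_k.
   After the last successful step the multiplier is frozen while the penalty parameter
   is multiplied by theta > 1 in every step, so |mu_k|^2 / rho_k is eventually
   non-increasing and hence bounded. *)

lemma L2_add: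
  assumes "L2 \<Omega> f" "L2 \<Omega> g"
  shows "L2 \<Omega> (\<lambda>x. f x + g x)"
proof -
  have meas: "(\<lambda>x. f x + g x) \<in> borel_measurable (lebesgue_on \<Omega>)"
    using assms by (auto simp: L2_def)
  have "integrable (lebesgue_on \<Omega>) (\<lambda>x. 2 * (f x)^2 + 2 * (g x)^2)"
    using assms by (auto simp: L2_def)
  moreover have "(f x + g x)^2 \<le> 2 * (f x)^2 + 2 * (g x)^2" for x
    using sum_squares_ge_zero[of "f x - g x" 0] by (simp add: power2_eq_square algebra_simps)
  ultimately have "integrable (lebesgue_on \<Omega>) (\<lambda>x. (f x + g x)^2)"
    using meas by (elim Bochner_Integration.integrable_bound) auto
  then show ?thesis
    using meas by (simp add: L2_def)
qed

lemma L2_cmult: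
  assumes "L2 \<Omega> f"
  shows "L2 \<Omega> (\<lambda>x. c * f x)"
  using assms by (auto simp: L2_def power_mult_distrib)

lemma L2_diff:
  assumes "L2 \<Omega> f" "L2 \<Omega> g"
  shows "L2 \<Omega> (\<lambda>x. f x - g x)"
  using L2_add[OF assms(1) L2_cmult[OF assms(2), of "-1"]] by simp

lemma L2_max_0:
  assumes "L2 \<Omega> f"
  shows "L2 \<Omega> (\<lambda>x. max 0 (f x))"
proof -
  have meas: "(\<lambda>x. max 0 (f x)) \<in> borel_measurable (lebesgue_on \<Omega>)"
    using assms by (auto simp: L2_def)
  have "integrable (lebesgue_on \<Omega>) (\<lambda>x. (f x)^2)"
    using assms by (auto simp: L2_def)
  then have "integrable (lebesgue_on \<Omega>) (\<lambda>x. (max 0 (f x))^2)"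
    using meas by (elim Bochner_Integration.integrable_bound) (auto simp: max_def)
  then show ?thesis
    using meas by (simp add: L2_def)
qed

lemma L2_continuous_on_closure:
  assumes "\<Omega> \<in> sets lebesgue" "bounded \<Omega>" "continuous_on (closure \<Omega>) f"
  shows "L2 \<Omega> f"
proof -
  interpret finite_measure "lebesgue_on \<Omega>"
    using assms(1,2) by (intro finite_measure_lebesgue_on bounded_set_imp_lmeasurable)
  have "continuous_on \<Omega> f"
    using assms(3) closure_subset by (rule continuous_on_subset)
  then have meas: "f \<in> borel_measurable (lebesgue_on \<Omega>)"
    using assms(1) by (rule continuous_imp_measurable_on_sets_lebesgue)
  have "bounded (f ` closure \<Omega>)"
    using assms(2,3) by (simp add: compact_continuous_image compact_imp_bounded)
  then obtain B where B: "\<And>x. x \<in> closure \<Omega> \<Longrightarrow> \<bar>f x\<bar> \<le> B"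
    unfolding bounded_iff by auto
  have "(f x)^2 \<le> B^2" if "x \<in> \<Omega>" for x
  proof -
    have "\<bar>f x\<bar> \<le> B"
      using B closure_subset that by blast
    then show ?thesis
      using power_mono[of "\<bar>f x\<bar>" B 2] by simp
  qed
  then have "integrable (lebesgue_on \<Omega>) (\<lambda>x. (f x)^2)"
    using meas by (intro integrable_const_bound[where B = "B^2"]) auto
  then show ?thesis
    using meas by (simp add: L2_def)
qed

lemma L2_mu_bar:
  assumes "L2 \<Omega> \<psi>" "L2 \<Omega> \<mu>" "L2 \<Omega> y"
  shows "L2 \<Omega> (mu_bar \<psi> \<mu> \<rho> y)"
  unfolding mu_bar_def using assms by (intro L2_max_0 L2_add L2_cmult L2_diff)

lemma L2_if_is_state:
  assumes "is_state \<Omega> a a0 d u y"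
  shows "L2 \<Omega> y"
  using assms by (simp add: is_state_def weak_sol_def H1_def)

lemma cost_nonneg:
  assumes "\<alpha> \<ge> 0"
  shows "cost \<Omega> yd \<alpha> y u \<ge> 0"
  unfolding cost_def using assms by (auto intro!: integral_nonneg_AE)

lemma penalty_le_multiplier_if_feasible:
  assumes "\<rho> \<ge> 0" "L2 \<Omega> \<mu>" "\<forall>x\<in>\<Omega>. y x \<le> \<psi> x"
  shows "(\<integral>x. (max 0 (\<mu> x + \<rho> * (y x - \<psi> x)))^2 \<partial>lebesgue_on \<Omega>)
           \<le> (\<integral>x. (\<mu> x)^2 \<partial>lebesgue_on \<Omega>)"
proof (rule integral_mono')
  show "integrable (lebesgue_on \<Omega>) (\<lambda>x. (\<mu> x)^2)"
    using assms(2) by (simp add: L2_def)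
  fix x assume "x \<in> space (lebesgue_on \<Omega>)"
  then have "\<rho> * (y x - \<psi> x) \<le> 0"
    using assms(1,3) by (simp add: mult_nonneg_nonpos)
  then have "max 0 (\<mu> x + \<rho> * (y x - \<psi> x)) \<le> \<bar>\<mu> x\<bar>"
    by simp
  then show "(max 0 (\<mu> x + \<rho> * (y x - \<psi> x)))^2 \<le> (\<mu> x)^2"
    by (metis abs_le_square_iff abs_of_nonneg max.cobounded1)
qed simp

lemma scaled_penalty_le_if_cost_AL_le:
  assumes "\<rho> > 0" "\<alpha> \<ge> 0" "L2 \<Omega> \<mu>" "\<forall>x\<in>\<Omega>. y' x \<le> \<psi> x"
    and "cost_AL \<Omega> yd \<alpha> \<psi> \<mu> \<rho> y u \<le> cost_AL \<Omega> yd \<alpha> \<psi> \<mu> \<rho> y' u'"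
  shows "1 / \<rho> * (\<integral>x. (max 0 (\<mu> x + \<rho> * (y x - \<psi> x)))^2 \<partial>lebesgue_on \<Omega>)
           \<le> 2 * cost \<Omega> yd \<alpha> y' u' + (\<integral>x. (\<mu> x)^2 \<partial>lebesgue_on \<Omega>) / \<rho>"
proof -
  let ?P = "\<integral>x. (max 0 (\<mu> x + \<rho> * (y x - \<psi> x)))^2 \<partial>lebesgue_on \<Omega>"
  let ?P' = "\<integral>x. (max 0 (\<mu> x + \<rho> * (y' x - \<psi> x)))^2 \<partial>lebesgue_on \<Omega>"
  let ?M = "\<integral>x. (\<mu> x)^2 \<partial>lebesgue_on \<Omega>"
  have "?P / (2 * \<rho>) \<le> cost \<Omega> yd \<alpha> y' u' + ?P' / (2 * \<rho>)"
    using assms(5) cost_nonneg[OF assms(2), of \<Omega> yd y u] by (simp add: cost_AL_def)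
  also have "?P' / (2 * \<rho>) \<le> ?M / (2 * \<rho>)"
    using assms(1) penalty_le_multiplier_if_feasible[OF _ assms(3,4)]
    by (simp add: divide_right_mono)
  finally show ?thesis
    using assms(1) by (simp add: field_simps)
qed

lemma bounded_above_if_eventually_nonincreasing:
  fixes a :: "nat \<Rightarrow> 'a::linorder"
  assumes "\<And>k. k \<ge> K \<Longrightarrow> a (Suc k) \<le> a k"
  shows "\<exists>B. \<forall>k. a k \<le> B"
proof (intro exI allI)
  have tail: "a k \<le> a K" if "k \<ge> K" for k
    using that by (induction k rule: dec_induct) (auto intro: order_trans assms)
  fix k
  show "a k \<le> Max (a ` {..K})"
  proof (cases "k \<le> K")
    case False
    then show ?thesis
      using tail[of k] by (auto intro: order_trans[OF _ Max_ge])
  qed simp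
qed

lemma penalty_parameter_pos:
  fixes \<rho> :: "nat \<Rightarrow> real"
  assumes "\<rho> 1 > 0" "\<theta> > 0"
    and "\<And>k. k \<ge> 1 \<Longrightarrow> \<rho> (Suc k) = (if succ k then \<rho> k else \<theta> * \<rho> k)"
    and "k \<ge> 1"
  shows "\<rho> k > 0"
  using assms(4) by (induction k rule: dec_induct) (use assms in auto)

lemma L2_multipliers:
  assumes "L2 \<Omega> \<psi>" "L2 \<Omega> (\<mu> 1)" "\<And>k. k \<ge> 1 \<Longrightarrow> L2 \<Omega> (y k)"
    and \<mu>_step: "\<And>k. k \<ge> 1 \<Longrightarrow> \<mu> (Suc k) = (if succ k then mu_bar \<psi> (\<mu> k) (\<rho> k) (y k) else \<mu> k)"
    and "k \<ge> 1"
  shows "L2 \<Omega> (\<mu> k)"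
  using assms(5)
proof (induction k rule: dec_induct)
  case (step k)
  then show ?case
    using L2_mu_bar[OF assms(1) step.IH assms(3)] \<mu>_step by simp
qed (rule assms(2))

lemma multiplier_ratio_bounded_if_finitely_many_successes:
  fixes \<mu> m :: "nat \<Rightarrow> 'a" and \<rho> :: "nat \<Rightarrow> real" and N :: "'a \<Rightarrow> real"
  assumes "\<rho> 1 > 0" "\<theta> > 1" "\<And>f. N f \<ge> 0" "finite {k. k \<ge> 1 \<and> succ k}"
    and \<mu>_step: "\<And>k. k \<ge> 1 \<Longrightarrow> \<mu> (Suc k) = (if succ k then m k else \<mu> k)"
    and \<rho>_step: "\<And>k. k \<ge> 1 \<Longrightarrow> \<rho> (Suc k) = (if succ k then \<rho> k else \<theta> * \<rho> k)"
  shows "\<exists>B. \<forall>k. N (\<mu> k) / \<rho> k \<le> B"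
proof -
  obtain K where K: "\<forall>k\<in>{k. k \<ge> 1 \<and> succ k}. k \<le> K"
    using assms(4) finite_nat_set_iff_bounded_le by blast
  have "N (\<mu> (Suc k)) / \<rho> (Suc k) \<le> N (\<mu> k) / \<rho> k" if "k \<ge> Suc K" for k
  proof -
    have "k \<ge> 1"
      using that by simp
    moreover have "\<not> succ k"
      using that K calculation by (metis (mono_tags) mem_Collect_eq not_less_eq_eq)
    ultimately
    have "\<mu> (Suc k) = \<mu> k" "\<rho> (Suc k) = \<theta> * \<rho> k"
      using \<mu>_step \<rho>_step by auto
    moreover have "\<rho> k > 0"
      using assms(2) \<rho>_step \<open>k \<ge> 1\<close>
      by (intro penalty_parameter_pos[where \<rho> = \<rho> and \<theta> = \<theta> and succ = succ, OF assms(1)]) simp_all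
    then have "N (\<mu> k) / (\<theta> * \<rho> k) \<le> N (\<mu> k) / \<rho> k"
      using assms(2,3) by (intro divide_left_mono) simp_all
    ultimately show ?thesis
      by simp
  qed
  then show ?thesis
    by (rule bounded_above_if_eventually_nonincreasing)
qed

theorem lemma4p5:
  fixes \<Omega> :: "(real^'n) set"
    and a :: "'n \<Rightarrow> 'n \<Rightarrow> real^'n \<Rightarrow> real" and a0 :: "real^'n \<Rightarrow> real" and \<delta> :: real
    and d dy dyy :: "real^'n \<Rightarrow> real \<Rightarrow> real" and E :: "(real^'n) set"
    and yd \<psi> ua ub :: "real^'n \<Rightarrow> real" and \<alpha> \<theta> \<tau> R0 :: real
    and \<mu> :: "nat \<Rightarrow> real^'n \<Rightarrow> real" and \<rho> :: "nat \<Rightarrow> real" and Rp :: "nat \<Rightarrow> real"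
    and ybar ubar :: "nat \<Rightarrow> real^'n \<Rightarrow> real"
  assumes dim: "CARD('n) = 2 \<or> CARD('n) = 3"
    and dom: "open \<Omega>" "connected \<Omega>" "bounded \<Omega>" "\<Omega> \<noteq> {}"
    and bdry: "C11_boundary \<Omega> \<or> (convex \<Omega> \<and> (\<exists>P. polytope P \<and> \<Omega> = interior P))"
    and a_lip: "\<forall>i j. \<exists>L. L-lipschitz_on (closure \<Omega>) (a i j)"
    and a_ell: "\<delta> > 0" "\<forall>x\<in>\<Omega>. \<forall>\<xi>::real^'n.
                  (\<Sum>i\<in>UNIV. \<Sum>j\<in>UNIV. a i j x * \<xi> $ i * \<xi> $ j) \<ge> \<delta> * (norm \<xi>)^2"
    and a0: "Linf \<Omega> a0" "AE x in lebesgue_on \<Omega>. a0 x \<ge> 0"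
            "\<not> (AE x in lebesgue_on \<Omega>. a0 x = 0)"
    and d_meas: "\<forall>t. (\<lambda>x. d x t) \<in> borel_measurable (lebesgue_on \<Omega>)"
    and d_C2: "AE x in lebesgue_on \<Omega>. (\<forall>t. (d x has_real_derivative dy x t) (at t)
                   \<and> (dy x has_real_derivative dyy x t) (at t)) \<and> continuous_on UNIV (dyy x)"
    and d_bd: "\<exists>C. AE x in lebesgue_on \<Omega>. \<bar>d x 0\<bar> + \<bar>dy x 0\<bar> + \<bar>dyy x 0\<bar> \<le> C"
    and dy_nonneg: "AE x in lebesgue_on \<Omega>. \<forall>t. dy x t \<ge> 0"
    and dyy_lip: "\<forall>M. \<exists>L. AE x in lebesgue_on \<Omega>. \<forall>s t. \<bar>s\<bar> \<le> M \<and> \<bar>t\<bar> \<le> M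
                    \<longrightarrow> \<bar>dyy x s - dyy x t\<bar> \<le> L * \<bar>s - t\<bar>"
    and E: "E \<subseteq> \<Omega>" "E \<in> sets lebesgue" "emeasure lebesgue E > 0" "\<forall>x\<in>E. \<forall>t. dy x t > 0"
    and yd: "L2 \<Omega> yd"
    and psi: "continuous_on (closure \<Omega>) \<psi>"
    and alpha: "\<alpha> > 0"
    and uab: "Linf \<Omega> ua" "Linf \<Omega> ub" "AE x in lebesgue_on \<Omega>. ua x \<le> ub x"
    and feasible: "\<exists>u y. u \<in> Uad \<Omega> ua ub \<and> is_state \<Omega> a a0 d u y \<and> (\<forall>x\<in>closure \<Omega>. y x \<le> \<psi> x)"
    and params: "\<rho> 1 > 0" "L2 \<Omega> (\<mu> 1)" "AE x in lebesgue_on \<Omega>. \<mu> 1 x \<ge> 0"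
                "\<theta> > 1" "0 < \<tau>" "\<tau> < 1" "R0 > 0" "Rp 1 = R0"
    and glob_min: "\<forall>k\<ge>1. ubar k \<in> Uad \<Omega> ua ub \<and> is_state \<Omega> a a0 d (ubar k) (ybar k)
                   \<and> (\<forall>u y. u \<in> Uad \<Omega> ua ub \<and> is_state \<Omega> a a0 d u y \<longrightarrow>
                        cost_AL \<Omega> yd \<alpha> \<psi> (\<mu> k) (\<rho> k) (ybar k) (ubar k)
                          \<le> cost_AL \<Omega> yd \<alpha> \<psi> (\<mu> k) (\<rho> k) y u)"
    and update: "\<forall>k\<ge>1.
        (let mb = mu_bar \<psi> (\<mu> k) (\<rho> k) (ybar k);
             R = resid \<Omega> \<psi> mb (ybar k);
             succ = (R \<le> \<tau> * Rp k)
         in \<mu> (Suc k) = (if succ then mb else \<mu> k)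
          \<and> \<rho> (Suc k) = (if succ then \<rho> k else \<theta> * \<rho> k)
          \<and> Rp (Suc k) = (if succ then R else Rp k))"
    and finitely_many_succ: "finite {k. k \<ge> 1 \<and>
        resid \<Omega> \<psi> (mu_bar \<psi> (\<mu> k) (\<rho> k) (ybar k)) (ybar k) \<le> \<tau> * Rp k}"
  shows "\<exists>C. \<forall>k\<ge>1. 1 / \<rho> k *
           (\<integral>x. (max 0 (\<mu> k x + \<rho> k * (ybar k x - \<psi> x)))^2 \<partial>lebesgue_on \<Omega>) \<le> C"
proof -
  define succ where "succ k \<longleftrightarrow>
    resid \<Omega> \<psi> (mu_bar \<psi> (\<mu> k) (\<rho> k) (ybar k)) (ybar k) \<le> \<tau> * Rp k" for k
  have \<mu>_step: "\<mu> (Suc k) = (if succ k then mu_bar \<psi> (\<mu> k) (\<rho> k) (ybar k) else \<mu> k)"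
    and \<rho>_step: "\<rho> (Suc k) = (if succ k then \<rho> k else \<theta> * \<rho> k)" if "k \<ge> 1" for k
    using update that by (simp_all add: succ_def Let_def)
  have \<rho>_pos: "\<rho> k > 0" if "k \<ge> 1" for k
    using params(4) \<rho>_step that
    by (intro penalty_parameter_pos[where \<rho> = \<rho> and \<theta> = \<theta> and succ = succ, OF params(1)]) simp_all
  have \<psi>_L2: "L2 \<Omega> \<psi>"
    using dom(1,3) psi by (intro L2_continuous_on_closure) auto
  have y_L2: "L2 \<Omega> (ybar k)" if "k \<ge> 1" for k
    using glob_min that L2_if_is_state by blast
  have \<mu>_L2: "L2 \<Omega> (\<mu> k)" if "k \<ge> 1" for k
    by (rule L2_multipliers[where \<mu> = \<mu> and y = ybar and succ = succ,
          OF \<psi>_L2 params(2) y_L2 \<mu>_step that])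
  have "\<exists>B. \<forall>k. (\<integral>x. (\<mu> k x)^2 \<partial>lebesgue_on \<Omega>) / \<rho> k \<le> B"
    using params(4) finitely_many_succ \<mu>_step \<rho>_step
    by (intro multiplier_ratio_bounded_if_finitely_many_successes[where \<rho> = \<rho> and \<theta> = \<theta>
          and succ = succ and N = "\<lambda>f. \<integral>x. (f x)^2 \<partial>lebesgue_on \<Omega>", OF params(1)])
      (auto simp: succ_def)
  then obtain B where B: "\<forall>k. (\<integral>x. (\<mu> k x)^2 \<partial>lebesgue_on \<Omega>) / \<rho> k \<le> B" ..
  obtain u' y' where feas: "u' \<in> Uad \<Omega> ua ub" "is_state \<Omega> a a0 d u' y'"
      "\<forall>x\<in>\<Omega>. y' x \<le> \<psi> x"
    using feasible closure_subset by blast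
  have "1 / \<rho> k * (\<integral>x. (max 0 (\<mu> k x + \<rho> k * (ybar k x - \<psi> x)))^2 \<partial>lebesgue_on \<Omega>)
          \<le> 2 * cost \<Omega> yd \<alpha> y' u' + (\<integral>x. (\<mu> k x)^2 \<partial>lebesgue_on \<Omega>) / \<rho> k" if "k \<ge> 1" for k
    using glob_min that feas(1,2) alpha
    by (intro scaled_penalty_le_if_cost_AL_le[OF \<rho>_pos[OF that] _ \<mu>_L2[OF that] feas(3)]) auto
  then show ?thesis
    using B by (meson add_left_mono order_trans)
qed

end
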